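(* Let $p$ be a prime, $q=p^m$, and $f:\mathbb{F}_q\to\mathbb{F}_p$ any function. The following are equivalent: (i) $f(ax)=f(x)$ for all $(a,x)\in\mathbb{F}_p^*\times\mathbb{F}_q$; (ii) $W_f(a\beta)=W_f(\beta)$ for all $(a,\beta)\in\mathbb{F}_p^*\times\mathbb{F}_q$; (iii) $aD_{f,i}=D_{f,i}$ for all $(a,i)\in\mathbb{F}_p^*\times\mathbb{F}_p$; (iv) $\chi_\beta(D_{f,i})$ is a rational integer for all $(i,\beta)\in\mathbb{F}_p\times\mathbb{F}_q$.
   Context: $\mathrm{Tr}$ is the absolute trace $\mathbb{F}_q\to\mathbb{F}_p$, $\zeta_p=e^{2\pi\sqrt{-1}/p}$, $W_f(\beta)=\sum_{x\in\mathbb{F}_q}\zeta_p^{f(x)-\mathrm{Tr}(\beta x)}$, $D_{f,i}=\{x\in\mathbb{F}_q:f(x)=i\}$, $aD=\{ad:d\in D\}$, and $\chi_\beta(D)=\sum_{\alpha\in D}\zeta_p^{\mathrm{Tr}(\beta\alpha)}$ for $D\subseteq\mathbb{F}_q$. *)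

theory Defs
  imports Complex_Main "Berlekamp_Zassenhaus.Finite_Field"
begin

text \<open>Setting: F_p is the type 'p mod_ring (with 'p of prime cardinality p),
  F_q is a finite field type 'q of characteristic p (hence q = CARD('q) = p^m).\<close>

definition emb :: "'p::prime_card mod_ring \<Rightarrow> 'q::{finite,field}" where
  "emb a = of_int (to_int_mod_ring a)"

definition ext_deg :: "'q::{finite,field} itself \<Rightarrow> nat" where
  "ext_deg (_ :: 'q itself) = (THE m. CARD('q) = CHAR('q) ^ m)"

definition abs_trace_q :: "'q::{finite,field} \<Rightarrow> 'q" where
  "abs_trace_q x = (\<Sum>i<ext_deg TYPE('q). x ^ (CHAR('q) ^ i))"

definition Tr :: "'q::{finite,field} \<Rightarrow> 'p::prime_card mod_ring" where
  "Tr x = (THE b. emb b = abs_trace_q x)"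

definition zeta_pow :: "'p::prime_card mod_ring \<Rightarrow> complex" where
  "zeta_pow b = exp (2 * of_real pi * \<i> * of_int (to_int_mod_ring b) / of_nat CARD('p))"

definition walsh :: "('q::{finite,field} \<Rightarrow> 'p::prime_card mod_ring) \<Rightarrow> 'q \<Rightarrow> complex" where
  "walsh f \<beta> = (\<Sum>x\<in>UNIV. zeta_pow (f x - Tr (\<beta> * x)))"

definition Dset :: "('q \<Rightarrow> 'p::prime_card mod_ring) \<Rightarrow> 'p mod_ring \<Rightarrow> 'q set" where
  "Dset f i = {x. f x = i}"

definition scale_set :: "'p::prime_card mod_ring \<Rightarrow> 'q::{finite,field} set \<Rightarrow> 'q set" where
  "scale_set a D = (\<lambda>d. emb a * d) ` D"

text \<open>chi_beta(D); the itself-argument fixes the prime field F_p = 'p mod_ring.\<close>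
definition chi :: "'p::prime_card itself \<Rightarrow> 'q::{finite,field} \<Rightarrow> 'q set \<Rightarrow> complex" where
  "chi (_ :: 'p itself) \<beta> D = (\<Sum>\<alpha>\<in>D. zeta_pow (Tr (\<beta> * \<alpha>) :: 'p mod_ring))"

end

(*
  Multiplication by a \<in> F_p^* commutes with the Fourier transform on F_q built from the
  additive characters x \<mapsto> zeta_p^Tr(beta x): the transform of x \<mapsto> g (a x) is
  beta \<mapsto> g^ (beta / a). By Fourier inversion, g is invariant under all such scalings iff its
  transform is. For g = zeta_p^f this is (i) <-> (ii); (i) <-> (iii) is immediate.

  For (iv), chi_beta(D) = sum_c N_c zeta_p^c, where N_c counts the x \<in> D with Tr (beta x) = c.
  Since 1 + X + ... + X^(p-1) is irreducible over Q, this is an integer iff N_c does not depend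
  on c \<noteq> 0. Scaling D by a turns N_c into N_(c/a), which gives (iii) -> (iv). Conversely,
  constant N_c force chi_(a beta)(D) = chi_beta(D), so the transform of the indicator of D, and
  hence D itself, is invariant under scaling.
*)
theory Submission
  imports Defs "Berlekamp_Zassenhaus.Factor_Bound" "HOL-Analysis.Complex_Transcendental"
begin

lemma to_int_mod_ring_bounds:
  "0 \<le> to_int_mod_ring (a :: 'a::finite mod_ring)" "to_int_mod_ring a < int CARD('a)"
  using range_to_int_mod_ring[where 'a='a] by auto

lemma to_int_mod_ring_of_nat:
  "to_int_mod_ring (of_nat n :: 'a::nontriv mod_ring) = int (n mod CARD('a))"
  unfolding of_nat_of_int_mod_ring o_def by transfer (simp add: zmod_int)

lemma of_int_to_int_mod_ring [simp]: "of_int (to_int_mod_ring a) = (a :: 'a::nontriv mod_ring)"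
  by (simp add: of_int_of_int_mod_ring)

lemma sum_mod_ring_UNIV:
  "(\<Sum>c\<in>UNIV. F c) = (\<Sum>k<CARD('a::nontriv). F (of_nat k :: 'a mod_ring))"
  by (rule sum.reindex_bij_witness[of _ "\<lambda>k. of_nat k" "\<lambda>c. nat (to_int_mod_ring c)"])
     (auto simp: to_int_mod_ring_of_nat to_int_mod_ring_bounds of_nat_of_int_mod_ring nat_less_iff)

subsection \<open>The polynomial $1 + X + \dots + X^{n-1}$\<close>

definition geom_poly :: "nat \<Rightarrow> 'a::comm_ring_1 poly" where
  "geom_poly n = (\<Sum>k<n. monom 1 k)"

lemma coeff_geom_poly: "coeff (geom_poly n) k = (if k < n then 1 else 0)"
  unfolding geom_poly_def by (simp add: coeff_sum coeff_monom)

lemma poly_geom_poly: "poly (geom_poly n) x = (\<Sum>k<n. x ^ k)"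
  unfolding geom_poly_def by (simp add: poly_sum poly_monom)

lemma map_poly_geom_poly: "h 0 = 0 \<Longrightarrow> h 1 = 1 \<Longrightarrow> map_poly h (geom_poly n) = geom_poly n"
  by (simp add: poly_eq_iff coeff_map_poly coeff_geom_poly)

lemma degree_geom_poly: "n > 0 \<Longrightarrow> degree (geom_poly n :: 'a::comm_ring_1 poly) = n - 1"
  by (intro antisym degree_le le_degree) (auto simp: coeff_geom_poly)

lemma geom_poly_nonzero: "n > 0 \<Longrightarrow> geom_poly n \<noteq> (0 :: 'a::comm_ring_1 poly)"
  by (metis coeff_0 coeff_geom_poly zero_neq_one)

lemma X_minus_1_times_geom_poly: "[:-1, 1:] * geom_poly n = monom (1 :: 'a::comm_ring_1) n - 1"
proof (induction n)
  case (Suc n)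
  have "[:-1, 1:] * monom (1 :: 'a) n = monom 1 (Suc n) - monom 1 n"
    by (simp add: monom_altdef algebra_simps)
  with Suc show ?case
    by (simp add: geom_poly_def distrib_left)
qed (simp add: geom_poly_def)

lemma geom_poly_mod_prime:
  "(geom_poly CARD('p) :: 'p::prime_card mod_ring poly) = [:-1, 1:] ^ (CARD('p) - 1)"
proof -
  let ?p = "CARD('p)"
  have p: "prime ?p" "CHAR('p mod_ring poly) = ?p"
    by (simp_all add: prime_card)
  have "[:-1, 1:] = ([:0, 1:] + (-1) :: 'p mod_ring poly)"
    by (simp add: poly_eq_iff coeff_pCons split: nat.splits)
  then have "[:-1, 1:] ^ ?p = ([:0, 1:] + (-1) :: 'p mod_ring poly) ^ ?p"
    by simp
  also have "\<dots> = [:0, 1:] ^ ?p + (-1) ^ ?p"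
    by (rule freshmans_dream) (use p in auto)
  also have "(-1 :: 'p mod_ring poly) ^ ?p = - 1"
    using minus_power_prime_CHAR[OF p(2)[symmetric] p(1), of 1] by simp
  also have "[:0, 1:] ^ ?p + - 1 = [:-1, 1:] * (geom_poly ?p :: 'p mod_ring poly)"
    unfolding X_minus_1_times_geom_poly by (simp add: monom_altdef)
  finally have "[:-1, 1:] ^ Suc (?p - 1) = [:-1, 1:] * (geom_poly ?p :: 'p mod_ring poly)"
    using prime_gt_0_nat[OF p(1)] by simp
  then show ?thesis
    unfolding power_Suc by (subst (asm) mult_cancel_left) simp
qed

text \<open>Reduction modulo $p$ turns $1 + X + \dots + X^{p-1}$ into $(X - 1)^{p-1}$, so a factor of
  positive degree must vanish at $1$ modulo $p$.\<close>

lemma geom_poly_prime_factor_at_1: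
  fixes g h :: "int poly"
  assumes gh: "geom_poly CARD('p::prime_card) = g * h" and deg: "degree g > 0"
  shows "int CARD('p) dvd poly g 1"
proof -
  let ?p = "CARD('p)"
  let ?m = "map_poly (of_int :: int \<Rightarrow> 'p mod_ring)"
  have p2: "?p \<ge> 2"
    using prime_ge_2_nat[OF prime_card] .
  have "lead_coeff g * lead_coeff h = lead_coeff (geom_poly ?p :: int poly)"
    by (simp add: gh lead_coeff_mult)
  also have "\<dots> = 1"
    using degree_geom_poly[of ?p, where 'a=int] p2 by (simp add: coeff_geom_poly)
  finally have "lead_coeff g * lead_coeff h = 1" .
  then have units: "lead_coeff g \<in> {1, -1}" "lead_coeff h \<in> {1, -1}"
    using zmult_eq_1_iff[of "lead_coeff g"] zmult_eq_1_iff[of "lead_coeff h"] by (auto simp: mult.commute)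
  have deg_m: "degree (?m g) = degree g" "degree (?m h) = degree h"
    by (rule map_poly_degree_eq; use units in auto)+
  have mgh: "?m g * ?m h = [:-1, 1:] ^ (?p - 1)"
    using arg_cong[OF gh, of ?m] by (simp add: hom_distribs map_poly_geom_poly geom_poly_mod_prime)
  then have nz: "?m g \<noteq> 0" "?m h \<noteq> 0"
    by auto
  have "g \<noteq> 0" "h \<noteq> 0"
    using nz by auto
  then have "degree g + degree h = ?p - 1"
    using gh degree_geom_poly[of ?p, where 'a=int] p2 by (simp flip: degree_mult_eq)
  moreover have "order 1 (?m g) + order 1 (?m h) = ?p - 1"
    using order_mult[of "?m g" "?m h" 1] mgh nz order_power_n_n[of "1::'p mod_ring" "?p - 1"] by simp
  moreover have "order 1 (?m g) \<le> degree g" "order 1 (?m h) \<le> degree h"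
    using order_degree[OF nz(1)] order_degree[OF nz(2)] deg_m by simp_all
  ultimately have "order 1 (?m g) > 0"
    using deg by linarith
  then have "(of_int (poly g 1) :: 'p mod_ring) = 0"
    using order_root[of "?m g" 1] nz(1) by (simp add: of_int_hom.poly_map_poly_1)
  then show ?thesis
    by (simp add: of_int_eq_0_iff_char_dvd)
qed

lemma geom_poly_prime_int_factors:
  fixes g h :: "int poly"
  assumes gh: "geom_poly CARD('p::prime_card) = g * h"
  shows "degree g = 0 \<or> degree h = 0"
proof (rule ccontr)
  let ?p = "int CARD('p)"
  assume "\<not> (degree g = 0 \<or> degree h = 0)"
  then have "?p dvd poly g 1" "?p dvd poly h 1"
    using geom_poly_prime_factor_at_1[of g h] geom_poly_prime_factor_at_1[of h g] gh
    by (auto simp: mult.commute)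
  then have "?p * ?p dvd poly g 1 * poly h 1"
    by (rule mult_dvd_mono)
  also have "poly g 1 * poly h 1 = ?p"
    using arg_cong[OF gh, of "\<lambda>f. poly f 1"] by (simp add: poly_geom_poly)
  finally show False
    using prime_gt_1_nat[OF prime_card[where 'a='p]] by simp
qed

lemma geom_poly_prime_rat_factors:
  fixes g h :: "rat poly"
  assumes "geom_poly CARD('p::prime_card) = g * h"
  shows "degree g = 0 \<or> degree h = 0"
proof -
  have "of_int_poly (geom_poly CARD('p) :: int poly) = g * h"
    using assms by (simp add: map_poly_geom_poly)
  from rat_to_int_factor[OF this] obtain g' h' :: "int poly"
    where "geom_poly CARD('p) = g' * h'" "degree g' = degree g" "degree h' = degree h"
    by blast
  with geom_poly_prime_int_factors[of g' h'] show ?thesis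
    by simp
qed

interpretation of_rat_poly_hom: map_poly_idom_hom "of_rat :: rat \<Rightarrow> 'a::field_char_0" ..

lemma geom_poly_dvd_if_root:
  fixes P :: "rat poly" and z :: complex
  assumes z: "z ^ CARD('p::prime_card) = 1" "z \<noteq> 1"
    and root: "poly (map_poly of_rat P) z = 0"
  shows "geom_poly CARD('p) dvd P"
proof -
  let ?p = "CARD('p)" and ?c = "map_poly (of_rat :: rat \<Rightarrow> complex)"
  let ?\<Phi> = "geom_poly ?p :: rat poly"
  have \<Phi>0: "?\<Phi> \<noteq> 0"
    using prime_gt_0_nat[OF prime_card[where 'a='p]] by (rule geom_poly_nonzero)
  have "(z - 1) * (\<Sum>k<?p. z ^ k) = 0"
    using power_diff_1_eq[of z ?p] z(1) by simp
  then have root_\<Phi>: "poly (?c ?\<Phi>) z = 0"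
    using z(2) by (simp add: map_poly_geom_poly poly_geom_poly)
  define G where "G = gcd P ?\<Phi>"
  obtain u v where "u * P + v * ?\<Phi> = G"
    unfolding G_def using bezout_coefficients_fst_snd by blast
  then have root_G: "poly (?c G) z = 0"
    using root root_\<Phi> by (metis of_rat_poly_hom.hom_add of_rat_poly_hom.hom_mult poly_add poly_mult
        mult_zero_right add_0)
  obtain r where r: "?\<Phi> = G * r"
    unfolding G_def by (metis gcd_dvd2 dvdE)
  have "degree G \<noteq> 0"
  proof
    assume "degree G = 0"
    then obtain c where "G = [:c:]"
      by (metis degree_eq_zeroE)
    then show False
      using root_G r \<Phi>0 by auto
  qed
  moreover have "degree G = 0 \<or> degree r = 0"
    using r by (rule geom_poly_prime_rat_factors)
  ultimately have "degree r = 0"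
    by simp
  then obtain c where c: "r = [:c:]" "c \<noteq> 0"
    using r \<Phi>0 by (metis degree_eq_zeroE mult_zero_right pCons_0_0)
  then have "G = smult (inverse c) ?\<Phi>"
    using r by simp
  then have "?\<Phi> dvd G"
    using c(2) by (simp add: dvd_smult_iff)
  also have "G dvd P"
    unfolding G_def by simp
  finally show ?thesis .
qed

text \<open>The irreducibility of the $p$-th cyclotomic polynomial over $\mathbb{Q}$: the only integer
  relations among $1, z, \dots, z^{p-1}$ are the multiples of $1 + z + \dots + z^{p-1} = 0$.\<close>

lemma int_relation_prime_root_of_unity:
  fixes a :: "nat \<Rightarrow> int" and z :: complex
  assumes z: "z ^ CARD('p::prime_card) = 1" "z \<noteq> 1"
    and rel: "(\<Sum>k<CARD('p). of_int (a k) * z ^ k) = 0"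
    and k: "k < CARD('p)"
  shows "a k = a 0"
proof -
  let ?p = "CARD('p)"
  have p: "?p > 0"
    using prime_gt_0_nat[OF prime_card[where 'a='p]] .
  define P :: "rat poly" where "P = (\<Sum>k<?p. monom (of_int (a k)) k)"
  have coeff_P: "coeff P j = (if j < ?p then of_int (a j) else 0)" for j
    unfolding P_def by (simp add: coeff_sum)
  have "poly (map_poly of_rat P) z = 0"
    using rel by (simp add: P_def of_rat_poly_hom.hom_sum poly_sum poly_monom)
  then obtain r where r: "P = geom_poly ?p * r"
    using geom_poly_dvd_if_root[OF z] by (metis dvdE)
  have "degree P \<le> ?p - 1"
    by (rule degree_le) (auto simp: coeff_P)
  have "degree r = 0"
  proof (cases "r = 0")
    case False
    then have "degree P = ?p - 1 + degree r"
      using r geom_poly_nonzero[OF p, where 'a=rat] by (simp add: degree_mult_eq degree_geom_poly[OF p])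
    with \<open>degree P \<le> ?p - 1\<close> show ?thesis
      by linarith
  qed simp
  then obtain c where "r = [:c:]"
    by (metis degree_eq_zeroE)
  then have "coeff P j = (if j < ?p then c else 0)" for j
    using r by (simp add: coeff_geom_poly)
  then show ?thesis
    using coeff_P[of k] coeff_P[of 0] k p by auto
qed

subsection \<open>Additive characters\<close>

lemma sum_character_eq_0:
  fixes \<psi> :: "'a::{finite,ab_group_add} \<Rightarrow> 'b::idom"
  assumes mult: "\<And>x y. \<psi> (x + y) = \<psi> x * \<psi> y" and nontrivial: "\<psi> y \<noteq> 1"
  shows "(\<Sum>x\<in>UNIV. \<psi> x) = 0"
proof -
  have "(\<Sum>x\<in>UNIV. \<psi> x) = (\<Sum>x\<in>UNIV. \<psi> (y + x))"
    by (rule sum.reindex_bij_witness[of _ "\<lambda>x. y + x" "\<lambda>x. x - y"]) auto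
  also have "\<dots> = \<psi> y * (\<Sum>x\<in>UNIV. \<psi> x)"
    by (simp add: mult sum_distrib_left)
  finally have "(1 - \<psi> y) * (\<Sum>x\<in>UNIV. \<psi> x) = 0"
    by (simp add: algebra_simps)
  with nontrivial show ?thesis
    by simp
qed

lemma zeta_pow_eq_exp:
  "zeta_pow (a :: 'p::prime_card mod_ring) =
     exp (2 * of_real pi * \<i> * of_nat (nat (to_int_mod_ring a)) / of_nat CARD('p))"
  unfolding zeta_pow_def using to_int_mod_ring_bounds(1)[of a] by simp

lemma zeta_pow_eq_iff: "zeta_pow a = zeta_pow b \<longleftrightarrow> a = (b :: 'p::prime_card mod_ring)"
  unfolding zeta_pow_eq_exp
  by (subst complex_root_unity_eq)
     (use prime_gt_0_nat[OF prime_card[where 'a='p]] to_int_mod_ring_bounds[of a]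
       to_int_mod_ring_bounds[of b] in \<open>auto simp: nat_less_iff eq_nat_nat_iff\<close>)

lemma zeta_pow_of_nat: "zeta_pow (of_nat n :: 'p::prime_card mod_ring) = zeta_pow (1 :: 'p mod_ring) ^ n"
proof -
  have p: "CARD('p) \<ge> 1"
    using prime_gt_0_nat[OF prime_card[where 'a='p]] by simp
  have "zeta_pow (of_nat n :: 'p mod_ring) = exp (2 * of_real pi * \<i> * of_nat n / of_nat CARD('p))"
    unfolding zeta_pow_eq_exp to_int_mod_ring_of_nat using complex_root_unity_eq[OF p] by simp
  also have "\<dots> = exp (of_nat n * (2 * of_real pi * \<i> / of_nat CARD('p)))"
    by (simp add: field_simps)
  also have "\<dots> = zeta_pow (1 :: 'p mod_ring) ^ n"
    unfolding exp_of_nat_mult by (simp add: zeta_pow_def)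
  finally show ?thesis .
qed

lemma zeta_pow_add: "zeta_pow (a + b :: 'p::prime_card mod_ring) = zeta_pow a * zeta_pow b"
proof -
  obtain k l where "a = of_nat k" "b = of_nat l"
    using surj_of_nat_mod_ring by metis
  then show ?thesis
    by (metis of_nat_add power_add zeta_pow_of_nat)
qed

lemma zeta_pow_0 [simp]: "zeta_pow 0 = 1"
  by (simp add: zeta_pow_def)

lemma zeta_pow_1_neq_1: "zeta_pow (1 :: 'p::prime_card mod_ring) \<noteq> 1"
  using zeta_pow_eq_iff[of "1 :: 'p mod_ring" 0] by simp

lemma zeta_pow_1_power_card: "zeta_pow (1 :: 'p::prime_card mod_ring) ^ CARD('p) = 1"
  by (simp flip: zeta_pow_of_nat)

lemma sum_zeta_pow_nonzero: "(\<Sum>c\<in>UNIV - {0}. zeta_pow (c :: 'p::prime_card mod_ring)) = - 1"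
proof -
  have "1 + (\<Sum>c\<in>UNIV - {0}. zeta_pow (c :: 'p mod_ring)) = (\<Sum>c\<in>UNIV. zeta_pow (c :: 'p mod_ring))"
    by (simp add: sum.remove[of UNIV 0])
  also have "\<dots> = 0"
    using zeta_pow_add zeta_pow_1_neq_1 by (rule sum_character_eq_0)
  finally show ?thesis
    by (simp add: eq_neg_iff_add_eq_0 add.commute)
qed

text \<open>The library proves the next lemma only for the sort \<open>finite_field\<close>, which a type variable
  of sort \<open>{finite, field}\<close> is not known to have.\<close>

lemma field_power_card_eq_self:
  fixes x :: "'a::{finite,field}"
  shows "x ^ CARD('a) = x"
proof (cases "x = 0")
  case True
  then show ?thesis
    by (simp add: finite_UNIV_card_ge_0)
next
  case False
  let ?N = "UNIV - {0 :: 'a}"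
  have "x ^ card ?N * \<Prod>?N = (\<Prod>y\<in>?N. x) * \<Prod>?N"
    by (simp only: prod_constant)
  also have "\<dots> = (\<Prod>y\<in>?N. x * y)"
    by (rule prod.distrib[symmetric])
  also have "\<dots> = \<Prod>?N"
    by (rule prod.reindex_bij_witness[of _ "\<lambda>y. y / x" "\<lambda>y. x * y"]) (use False in auto)
  finally have "x ^ card ?N = 1"
    by simp
  moreover have "card ?N = CARD('a) - 1" "CARD('a) > 0"
    by (rule card_Diff_singleton, simp) (rule finite_UNIV_card_ge_0, simp)
  ultimately have "x ^ CARD('a) = x * x ^ card ?N"
    by (metis Suc_diff_1 power_Suc)
  then show ?thesis
    using \<open>x ^ card ?N = 1\<close> by simp
qed

lemma mult_image_eq_iff:
  fixes u :: "'a::field"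
  assumes "u \<noteq> 0"
  shows "(\<lambda>d. u * d) ` D = D \<longleftrightarrow> (\<forall>x. u * x \<in> D \<longleftrightarrow> x \<in> D)"
proof
  assume D: "(\<lambda>d. u * d) ` D = D"
  show "\<forall>x. u * x \<in> D \<longleftrightarrow> x \<in> D"
  proof
    fix x
    have "u * x \<in> (\<lambda>d. u * d) ` D \<longleftrightarrow> x \<in> D"
    proof
      assume "u * x \<in> (\<lambda>d. u * d) ` D"
      then obtain d where "d \<in> D" "u * x = u * d"
        by blast
      with assms show "x \<in> D"
        by simp
    qed blast
    then show "u * x \<in> D \<longleftrightarrow> x \<in> D"
      by (simp only: D)
  qed
next
  assume invariant: "\<forall>x. u * x \<in> D \<longleftrightarrow> x \<in> D"
  show "(\<lambda>d. u * d) ` D = D"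
  proof (intro equalityI subsetI)
    fix y
    assume "y \<in> (\<lambda>d. u * d) ` D"
    then obtain d where "d \<in> D" "y = u * d"
      by blast
    with invariant show "y \<in> D"
      by blast
  next
    fix y
    assume "y \<in> D"
    then have "y / u \<in> D" and "y = u * (y / u)"
      using invariant[rule_format, of "y / u"] assms by simp_all
    then show "y \<in> (\<lambda>d. u * d) ` D"
      by blast
  qed
qed

definition add_closed :: "'a::monoid_add set \<Rightarrow> bool" where
  "add_closed V \<longleftrightarrow> 0 \<in> V \<and> (\<forall>x\<in>V. \<forall>y\<in>V. x + y \<in> V)"

lemma add_closed_emb_mult:
  assumes "add_closed V" "v \<in> V"
  shows "emb (a :: 'p::prime_card mod_ring) * v \<in> V"
proof -
  have "of_nat n * v \<in> V" for n
    using assms by (induction n) (auto simp: add_closed_def distrib_right)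
  then show ?thesis
    unfolding emb_def using to_int_mod_ring_bounds(1)[of a] by (metis of_nat_nat of_int_of_nat_eq)
qed

text \<open>Statements must pin down both types: a type left to inference becomes a fresh variable that the
  characteristic assumption does not constrain.\<close>

context
  assumes char: "CHAR('q::{finite,field}) = CARD('p::prime_card)"
begin

lemma emb_eq_of_int_iff: "(emb a :: 'q) = of_int n \<longleftrightarrow> a = (of_int n :: 'p mod_ring)"
proof -
  have "(emb a :: 'q) = of_int n \<longleftrightarrow> [to_int_mod_ring a = n] (mod int CHAR('q))"
    unfolding emb_def by (rule of_int_eq_iff_cong_CHAR)
  also have "\<dots> \<longleftrightarrow> (of_int (to_int_mod_ring a) :: 'p mod_ring) = of_int n"
    using of_int_eq_iff_cong_CHAR[of "to_int_mod_ring a" n, where 'a="'p mod_ring"]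
    by (simp add: char)
  finally show ?thesis
    by simp
qed

interpretation emb: field_hom "emb :: 'p mod_ring \<Rightarrow> 'q"
proof
  fix a b :: "'p mod_ring"
  have "(emb (a + b) :: 'q) = of_int (to_int_mod_ring a + to_int_mod_ring b)"
    unfolding emb_eq_of_int_iff by simp
  then show "(emb (a + b) :: 'q) = emb a + emb b"
    by (simp add: emb_def)
  have "(emb (a * b) :: 'q) = of_int (to_int_mod_ring a * to_int_mod_ring b)"
    unfolding emb_eq_of_int_iff by simp
  then show "(emb (a * b) :: 'q) = emb a * emb b"
    by (simp add: emb_def)
  show "(emb 0 :: 'q) = 0" "(emb 1 :: 'q) = 1"
    by (simp_all add: emb_def)
qed

lemma emb_eq_0_iff [simp]: "(emb (a :: 'p mod_ring) :: 'q) = 0 \<longleftrightarrow> a = 0"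
  by simp

lemma emb_power_card: "(emb (a :: 'p mod_ring) :: 'q) ^ CARD('p) = emb a"
proof -
  have "a ^ CARD('p) = a"
    using finite_field_power_card_eq_same[of a] by simp
  then show ?thesis
    by (simp flip: emb.hom_power)
qed

lemma scale_set_eq_iff:
  assumes "(a :: 'p mod_ring) \<noteq> 0"
  shows "scale_set a D = D \<longleftrightarrow> (\<forall>x. emb a * x \<in> D \<longleftrightarrow> x \<in> (D :: 'q set))"
  unfolding scale_set_def using assms by (simp add: mult_image_eq_iff)

subsection \<open>The order of $\mathbb{F}_q$\<close>

lemma inj_on_emb_mult_add:
  assumes V: "add_closed (V :: 'q set)" and x: "x \<notin> V"
  shows "inj_on (\<lambda>(c :: 'p mod_ring, v). emb c * x + v) (UNIV \<times> V)"
proof (rule inj_onI, clarify)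
  fix c d :: "'p mod_ring" and v w
  assume v: "v \<in> V" and w: "w \<in> V" and eq: "emb c * x + v = emb d * x + w"
  have "c = d"
  proof (rule ccontr)
    assume "c \<noteq> d"
    have "emb (c - d) * x = w - v"
      using eq by (simp add: emb.hom_minus algebra_simps)
    then have "emb (inverse (c - d)) * (w - v) = emb (inverse (c - d) * (c - d)) * x"
      by (simp add: emb.hom_mult mult.assoc)
    then have "x = emb (inverse (c - d)) * (w - v)"
      using \<open>c \<noteq> d\<close> by simp
    moreover have "w + emb (- 1 :: 'p mod_ring) * v \<in> V"
      using V v w add_closed_emb_mult[OF V v] unfolding add_closed_def by blast
    then have "w - v \<in> V"
      using emb.hom_uminus[of 1] by simp
    ultimately show False
      using x add_closed_emb_mult[OF V] by metis
  qed
  with eq show "c = d \<and> v = w"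
    by simp
qed

lemma add_closed_extend:
  assumes V: "add_closed (V :: 'q set)" and x: "x \<notin> V"
  defines "W \<equiv> (\<lambda>(c :: 'p mod_ring, v). emb c * x + v) ` (UNIV \<times> V)"
  shows "add_closed W" and "card W = CARD('p) * card V"
proof -
  let ?f = "\<lambda>(c :: 'p mod_ring, v). emb c * x + v"
  show "add_closed W"
    unfolding add_closed_def W_def
  proof (intro conjI ballI)
    show "0 \<in> ?f ` (UNIV \<times> V)"
      using V unfolding add_closed_def by (intro image_eqI[of _ _ "(0, 0)"]) auto
    fix y z
    assume "y \<in> ?f ` (UNIV \<times> V)" "z \<in> ?f ` (UNIV \<times> V)"
    then obtain c d :: "'p mod_ring" and v w
      where "y = emb c * x + v" "z = emb d * x + w" "v \<in> V" "w \<in> V"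
      by fastforce
    then show "y + z \<in> ?f ` (UNIV \<times> V)"
      using V unfolding add_closed_def
      by (intro image_eqI[of _ _ "(c + d, v + w)"]) (auto simp: emb.hom_add algebra_simps)
  qed
  show "card W = CARD('p) * card V"
    unfolding W_def using inj_on_emb_mult_add[OF V x]
    by (simp add: card_image card_cartesian_product)
qed

lemma prime_power_card_if_add_closed:
  "add_closed (V :: 'q set) \<Longrightarrow> card V = CARD('p) ^ k \<Longrightarrow> \<exists>m. CARD('q) = CARD('p) ^ m"
proof (induction "CARD('q) - card V" arbitrary: V k rule: less_induct)
  case less
  show ?case
  proof (cases "V = UNIV")
    case True
    with less.prems show ?thesis
      by auto
  next
    case False
    then obtain x where x: "x \<notin> V"
      by blast
    define W where "W = (\<lambda>(c :: 'p mod_ring, v). emb c * x + v) ` (UNIV \<times> V)"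
    have W: "add_closed W" "card W = CARD('p) * card V"
      using add_closed_extend[OF less.prems(1) x] unfolding W_def by blast+
    have "card V < CARD('q)"
      using False by (intro psubset_card_mono) auto
    moreover have "card V > 0"
      using less.prems(1) by (auto simp: add_closed_def card_gt_0_iff)
    moreover have "card W \<le> CARD('q)"
      by (simp add: card_mono)
    moreover have "CARD('p) \<ge> 2"
      using prime_ge_2_nat[OF prime_card] .
    ultimately have "CARD('q) - card W < CARD('q) - card V"
      using W(2) by (simp add: diff_less_mono2)
    with less.hyps[OF _ W(1)] show ?thesis
      using W(2) less.prems(2) by (simp flip: power_Suc)
  qed
qed

lemma CARD_eq_power_ext_deg: "CARD('q) = CARD('p) ^ ext_deg TYPE('q)"
proof -
  have "add_closed {0 :: 'q}" "card {0 :: 'q} = CARD('p) ^ 0"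
    by (simp_all add: add_closed_def)
  then obtain m where m: "CARD('q) = CARD('p) ^ m"
    using prime_power_card_if_add_closed by blast
  have "\<exists>!m. CARD('q) = CHAR('q) ^ m"
    using m prime_gt_1_nat[OF prime_card[where 'a='p]] by (auto simp: char power_inject_exp)
  then show ?thesis
    unfolding ext_deg_def char[symmetric] by (rule theI')
qed

lemma ext_deg_pos: "ext_deg TYPE('q) > 0"
proof -
  have "card {0 :: 'q, 1} \<le> CARD('q)"
    by (rule card_mono) auto
  then show ?thesis
    using CARD_eq_power_ext_deg by (cases "ext_deg TYPE('q)") auto
qed

subsection \<open>The absolute trace\<close>

lemma abs_trace_q_eq: "abs_trace_q (x :: 'q) = (\<Sum>i<ext_deg TYPE('q). x ^ (CARD('p) ^ i))"
  unfolding abs_trace_q_def char ..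

lemma abs_trace_q_power_char: "abs_trace_q (x :: 'q) ^ CARD('p) = abs_trace_q x"
proof -
  let ?p = "CARD('p)" and ?m = "ext_deg TYPE('q)"
  have "abs_trace_q x ^ ?p = (\<Sum>i<?m. (x ^ (?p ^ i)) ^ ?p)"
    unfolding abs_trace_q_eq by (rule freshmans_dream_sum) (simp_all add: char prime_card)
  also have "\<dots> = (\<Sum>i<?m. x ^ (?p ^ Suc i))"
    by (simp add: power_mult[symmetric] mult.commute)
  also have "\<dots> = (\<Sum>i<Suc ?m. x ^ (?p ^ i)) - x"
    by (subst sum.lessThan_Suc_shift) simp
  also have "\<dots> = abs_trace_q x"
    using field_power_card_eq_self[of x] by (simp add: abs_trace_q_eq flip: CARD_eq_power_ext_deg)
  finally show ?thesis .
qed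

lemma power_char_eq_self_imp_in_range_emb:
  assumes "(y :: 'q) ^ CARD('p) = y"
  shows "y \<in> range (emb :: 'p mod_ring \<Rightarrow> 'q)"
proof -
  let ?p = "CARD('p)"
  have p2: "?p \<ge> 2"
    using prime_ge_2_nat[OF prime_card] .
  define P :: "'q poly" where "P = monom 1 ?p - monom 1 1"
  have "coeff P ?p = 1"
    unfolding P_def using p2 by (simp add: coeff_monom)
  then have "P \<noteq> 0"
    by auto
  moreover have "degree P \<le> ?p"
    unfolding P_def by (rule degree_le) (use p2 in \<open>auto simp: coeff_monom\<close>)
  moreover have roots: "{x. poly P x = 0} = {x. x ^ ?p = x}"
    unfolding P_def by (auto simp: poly_monom)
  ultimately have "card {x :: 'q. x ^ ?p = x} \<le> ?p"
    using card_poly_roots_bound[of P] by simp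
  moreover have "range (emb :: 'p mod_ring \<Rightarrow> 'q) \<subseteq> {x. x ^ ?p = x}"
    using emb_power_card by auto
  moreover have "card (range (emb :: 'p mod_ring \<Rightarrow> 'q)) = ?p"
    by (simp add: card_image emb.inj_f)
  ultimately have "range (emb :: 'p mod_ring \<Rightarrow> 'q) = {x. x ^ ?p = x}"
    by (metis card_seteq finite)
  with assms show ?thesis
    by auto
qed

lemma emb_Tr: "emb (Tr (x :: 'q) :: 'p mod_ring) = abs_trace_q x"
proof -
  obtain b :: "'p mod_ring" where "emb b = abs_trace_q x"
    using power_char_eq_self_imp_in_range_emb[OF abs_trace_q_power_char[of x]] by (metis rangeE)
  then have "\<exists>!b :: 'p mod_ring. emb b = abs_trace_q x"
    by (metis emb.eq_iff)
  then show ?thesis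
    unfolding Tr_def by (rule theI')
qed

lemma Tr_add: "(Tr (x + y :: 'q) :: 'p mod_ring) = Tr x + Tr y"
proof -
  have "abs_trace_q (x + y) = abs_trace_q x + abs_trace_q y"
    unfolding abs_trace_q_eq by (simp add: freshmans_dream' char prime_card sum.distrib)
  then show ?thesis
    by (simp flip: emb.eq_iff emb_Tr add: emb.hom_add)
qed

lemma Tr_emb_mult: "(Tr (emb a * x :: 'q) :: 'p mod_ring) = a * Tr x"
proof -
  have "abs_trace_q (emb a * x) = emb a * abs_trace_q x"
    unfolding abs_trace_q_eq
    by (simp add: power_mult_distrib sum_distrib_left emb.hom_power[symmetric] finite_field_power_card_power_eq_same)
  then show ?thesis
    by (simp flip: emb.eq_iff emb_Tr add: emb.hom_mult)
qed

interpretation Tr: ab_group_add_hom "Tr :: 'q \<Rightarrow> 'p mod_ring"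
  by unfold_locales (simp_all add: Tr_add Tr_emb_mult[of 0 0, simplified])

lemma abs_trace_q_nonzero: "\<exists>x :: 'q. abs_trace_q x \<noteq> 0"
proof -
  let ?p = "CARD('p)" and ?m = "ext_deg TYPE('q)"
  have p2: "?p \<ge> 2"
    using prime_ge_2_nat[OF prime_card] .
  define Q :: "'q poly" where "Q = (\<Sum>i<?m. monom 1 (?p ^ i))"
  have coeff_Q: "coeff Q j = (\<Sum>i<?m. if ?p ^ i = j then 1 else 0)" for j
    unfolding Q_def by (simp add: coeff_sum coeff_monom)
  have "coeff Q (?p ^ (?m - 1)) = 1"
    unfolding coeff_Q using p2 ext_deg_pos by (simp add: power_inject_exp)
  then have "Q \<noteq> 0"
    by auto
  moreover have "degree Q \<le> ?p ^ (?m - 1)"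
  proof (rule degree_le, intro allI impI)
    fix j
    assume "?p ^ (?m - 1) < j"
    moreover have "?p ^ i \<le> ?p ^ (?m - 1)" if "i < ?m" for i
      using that p2 by (intro power_increasing) auto
    ultimately show "coeff Q j = 0"
      unfolding coeff_Q by (intro sum.neutral) fastforce
  qed
  moreover have "?p ^ (?m - 1) < CARD('q)"
    using p2 ext_deg_pos by (simp add: CARD_eq_power_ext_deg)
  ultimately have "card {x. poly Q x = 0} < CARD('q)"
    using card_poly_roots_bound[of Q] by linarith
  then have "{x. poly Q x = 0} \<noteq> UNIV"
    by auto
  then obtain x where "poly Q x \<noteq> 0"
    by auto
  moreover have "poly Q x = abs_trace_q x"
    by (simp add: Q_def abs_trace_q_eq poly_sum poly_monom)
  ultimately show ?thesis
    by auto
qed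

lemma ex_Tr_eq_1: "\<exists>y :: 'q. (Tr y :: 'p mod_ring) = 1"
proof -
  obtain x :: 'q where "abs_trace_q x \<noteq> 0"
    using abs_trace_q_nonzero by blast
  then have "(Tr x :: 'p mod_ring) \<noteq> 0"
    by (simp flip: emb_Tr)
  then have "(Tr (emb (inverse (Tr x :: 'p mod_ring)) * x) :: 'p mod_ring) = 1"
    by (simp add: Tr_emb_mult)
  then show ?thesis ..
qed

subsection \<open>Fourier analysis on $\mathbb{F}_q$\<close>

lemma sum_zeta_pow_Tr_mult:
  "(\<Sum>b\<in>UNIV. zeta_pow (Tr (b * w :: 'q) :: 'p mod_ring)) = (if w = 0 then of_nat CARD('q) else 0)"
proof (cases "w = 0")
  case False
  obtain y :: 'q where y: "(Tr y :: 'p mod_ring) = 1"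
    using ex_Tr_eq_1 by blast
  have "(\<Sum>b\<in>UNIV. zeta_pow (Tr (b * w) :: 'p mod_ring)) = (\<Sum>x\<in>UNIV. zeta_pow (Tr (x :: 'q) :: 'p mod_ring))"
    by (rule sum.reindex_bij_witness[of _ "\<lambda>x. x / w" "\<lambda>b. b * w"]) (use False in auto)
  also have "\<dots> = 0"
    by (rule sum_character_eq_0[where y = y]) (simp_all add: Tr_add zeta_pow_add y zeta_pow_1_neq_1)
  finally show ?thesis
    using False by simp
qed (simp add: Tr.hom_zero)

definition fourier :: "'p itself \<Rightarrow> ('q \<Rightarrow> complex) \<Rightarrow> 'q \<Rightarrow> complex" where
  "fourier _ g b = (\<Sum>x\<in>UNIV. g x * zeta_pow (Tr (b * x) :: 'p mod_ring))"

lemma fourier_inversion: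
  "(\<Sum>b\<in>UNIV. fourier TYPE('p) g b * zeta_pow (- Tr (b * y) :: 'p mod_ring)) = of_nat CARD('q) * g (y :: 'q)"
proof -
  have character: "zeta_pow (Tr (b * x) :: 'p mod_ring) * zeta_pow (- Tr (b * y) :: 'p mod_ring)
      = zeta_pow (Tr (b * (x - y)) :: 'p mod_ring)" for b x :: 'q
    by (simp add: right_diff_distrib Tr.hom_minus flip: zeta_pow_add)
  have "(\<Sum>b\<in>UNIV. fourier TYPE('p) g b * zeta_pow (- Tr (b * y) :: 'p mod_ring))
      = (\<Sum>b\<in>UNIV. \<Sum>x\<in>UNIV. g x * zeta_pow (Tr (b * (x - y)) :: 'p mod_ring))"
    unfolding fourier_def sum_distrib_right by (simp add: mult.assoc character)
  also have "\<dots> = (\<Sum>x\<in>UNIV. g x * (\<Sum>b\<in>UNIV. zeta_pow (Tr (b * (x - y)) :: 'p mod_ring)))"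
    by (subst sum.swap) (simp add: sum_distrib_left)
  also have "\<dots> = (\<Sum>x\<in>UNIV. if x = y then of_nat CARD('q) * g y else 0)"
    by (intro sum.cong) (auto simp: sum_zeta_pow_Tr_mult)
  finally show ?thesis
    by simp
qed

lemma fourier_inject: "fourier TYPE('p) g = fourier TYPE('p) h \<Longrightarrow> g = (h :: 'q \<Rightarrow> complex)"
  using fourier_inversion[of g] fourier_inversion[of h] by (simp add: fun_eq_iff)

lemma fourier_mult_arg:
  assumes "(u :: 'q) \<noteq> 0"
  shows "fourier TYPE('p) g (u * b) = fourier TYPE('p) (\<lambda>x. g (x / u)) b"
  unfolding fourier_def
  by (rule sum.reindex_bij_witness[of _ "\<lambda>x. x / u" "\<lambda>x. u * x"]) (use assms in \<open>auto simp: ac_simps\<close>)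

lemma fourier_scale_invariant_iff:
  assumes u: "(u :: 'q) \<noteq> 0"
  shows "(\<forall>b. fourier TYPE('p) g (u * b) = fourier TYPE('p) g b) \<longleftrightarrow> (\<forall>x. g (u * x) = g x)"
proof -
  have "(\<forall>b. fourier TYPE('p) g (u * b) = fourier TYPE('p) g b)
      \<longleftrightarrow> fourier TYPE('p) (\<lambda>x. g (x / u)) = fourier TYPE('p) g"
    by (simp add: fourier_mult_arg u fun_eq_iff)
  also have "\<dots> \<longleftrightarrow> (\<forall>x. g (x / u) = g x)"
    using fourier_inject by (auto simp: fun_eq_iff)
  also have "\<dots> \<longleftrightarrow> (\<forall>x. g (u * x) = g x)"
  proof
    assume "\<forall>x. g (x / u) = g x"
    then show "\<forall>x. g (u * x) = g x"
      using u by (metis nonzero_mult_div_cancel_left)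
  next
    assume "\<forall>x. g (u * x) = g x"
    then show "\<forall>x. g (x / u) = g x"
      using u by (metis nonzero_mult_div_cancel_left times_divide_eq_right)
  qed
  finally show ?thesis .
qed

lemma walsh_eq_fourier:
  "walsh (f :: 'q \<Rightarrow> 'p mod_ring) b = fourier TYPE('p) (\<lambda>x. zeta_pow (f x)) (- b)"
  unfolding walsh_def fourier_def by (simp add: Tr.hom_uminus flip: zeta_pow_add)

lemma chi_eq_fourier: "chi TYPE('p) (b :: 'q) D = fourier TYPE('p) (\<lambda>x. of_bool (x \<in> D)) b"
  unfolding chi_def fourier_def by (simp add: sum.If_cases Int_def)

lemma walsh_scale_invariant_iff:
  assumes u: "(u :: 'q) \<noteq> 0"
  shows "(\<forall>\<beta>. walsh (f :: 'q \<Rightarrow> 'p mod_ring) (u * \<beta>) = walsh f \<beta>) \<longleftrightarrow> (\<forall>x. f (u * x) = f x)"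
proof -
  let ?g = "\<lambda>x. zeta_pow (f x)"
  have "(\<forall>\<beta>. walsh f (u * \<beta>) = walsh f \<beta>) \<longleftrightarrow> (\<forall>b. fourier TYPE('p) ?g (u * b) = fourier TYPE('p) ?g b)"
    unfolding walsh_eq_fourier
  proof (intro iffI allI)
    fix b
    assume "\<forall>\<beta>. fourier TYPE('p) ?g (- (u * \<beta>)) = fourier TYPE('p) ?g (- \<beta>)"
    from this[rule_format, of "- b"] show "fourier TYPE('p) ?g (u * b) = fourier TYPE('p) ?g b"
      by simp
  next
    fix \<beta>
    assume "\<forall>b. fourier TYPE('p) ?g (u * b) = fourier TYPE('p) ?g b"
    from this[rule_format, of "- \<beta>"] show "fourier TYPE('p) ?g (- (u * \<beta>)) = fourier TYPE('p) ?g (- \<beta>)"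
      by simp
  qed
  also have "\<dots> \<longleftrightarrow> (\<forall>x. ?g (u * x) = ?g x)"
    by (rule fourier_scale_invariant_iff[OF u])
  finally show ?thesis
    by (simp add: zeta_pow_eq_iff)
qed

subsection \<open>Level counts of the trace on a set\<close>

definition tr_count :: "'q set \<Rightarrow> 'q \<Rightarrow> 'p mod_ring \<Rightarrow> nat" where
  "tr_count D b c = card {x \<in> D. Tr (b * x) = c}"

lemma chi_eq_sum_tr_count:
  "chi TYPE('p) (b :: 'q) D = (\<Sum>c\<in>UNIV. of_nat (tr_count D b c) * zeta_pow (c :: 'p mod_ring))"
proof -
  have fiber: "of_nat (tr_count D b c) * zeta_pow c
      = (\<Sum>x\<in>{x \<in> D. Tr (b * x) = c}. zeta_pow (Tr (b * x) :: 'p mod_ring))" for c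
  proof -
    have "(\<Sum>x\<in>{x \<in> D. Tr (b * x) = c}. zeta_pow (Tr (b * x) :: 'p mod_ring))
        = (\<Sum>x\<in>{x \<in> D. Tr (b * x) = c}. zeta_pow c)"
      by (rule sum.cong) auto
    then show ?thesis
      unfolding tr_count_def by simp
  qed
  have "(\<Sum>c\<in>UNIV. of_nat (tr_count D b c) * zeta_pow (c :: 'p mod_ring))
      = (\<Sum>c\<in>UNIV. \<Sum>x\<in>{x \<in> D. Tr (b * x) = (c :: 'p mod_ring)}. zeta_pow (Tr (b * x) :: 'p mod_ring))"
    by (intro sum.cong refl) (rule fiber)
  also have "\<dots> = chi TYPE('p) b D"
    unfolding chi_def by (rule sum.group) auto
  finally show ?thesis ..
qed

lemma chi_in_Ints_imp_tr_count_const: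
  assumes n: "chi TYPE('p) (b :: 'q) D = of_int n" and c: "(c :: 'p mod_ring) \<noteq> 0"
  shows "tr_count D b c = tr_count D b 1"
proof -
  let ?p = "CARD('p)" and ?z = "zeta_pow (1 :: 'p mod_ring)"
  define N where "N k = tr_count D b (of_nat k :: 'p mod_ring)" for k
  define a where "a k = int (N k) - (if k = 0 then n else 0)" for k
  have p: "1 < ?p"
    using prime_gt_1_nat[OF prime_card[where 'a='p]] .
  have "of_int (a k) * ?z ^ k = of_nat (N k) * ?z ^ k - (if k = 0 then of_int n else 0)" for k
    by (simp add: a_def algebra_simps)
  then have "(\<Sum>k<?p. of_int (a k) * ?z ^ k)
      = (\<Sum>k<?p. of_nat (N k) * ?z ^ k) - (\<Sum>k<?p. if k = 0 then of_int n else 0)"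
    by (simp add: sum_subtractf)
  also have "(\<Sum>k<?p. of_nat (N k) * ?z ^ k) = chi TYPE('p) b D"
    unfolding chi_eq_sum_tr_count sum_mod_ring_UNIV zeta_pow_of_nat N_def ..
  also have "(\<Sum>k<?p. if k = 0 then of_int n else 0) = (of_int n :: complex)"
    using p by simp
  finally have "(\<Sum>k<?p. of_int (a k) * ?z ^ k) = 0"
    using n by simp
  then have a_const: "a k = a 0" if "k < ?p" for k
    using int_relation_prime_root_of_unity[OF zeta_pow_1_power_card zeta_pow_1_neq_1] that by blast
  obtain k where k: "k < ?p" "c = of_nat k"
    using surj_of_nat_mod_ring by blast
  have "k \<noteq> 0"
  proof
    assume "k = 0"
    with c k show False
      by simp
  qed
  then have "N k = N 1"
    using a_const[OF k(1)] a_const[OF p] by (simp add: a_def)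
  then show ?thesis
    using k by (simp add: N_def)
qed

lemma chi_eq_if_tr_count_const:
  assumes const: "\<And>c. c \<noteq> 0 \<Longrightarrow> tr_count D b c = tr_count D b (1 :: 'p mod_ring)"
  shows "chi TYPE('p) (b :: 'q) D = of_nat (tr_count D b 0) - of_nat (tr_count D b (1 :: 'p mod_ring))"
proof -
  have "chi TYPE('p) b D = of_nat (tr_count D b 0)
      + (\<Sum>c\<in>UNIV - {0}. of_nat (tr_count D b c) * zeta_pow (c :: 'p mod_ring))"
    unfolding chi_eq_sum_tr_count
    using sum.remove[of UNIV 0 "\<lambda>c. of_nat (tr_count D b c) * zeta_pow (c :: 'p mod_ring)"] by simp
  also have "(\<Sum>c\<in>UNIV - {0}. of_nat (tr_count D b c) * zeta_pow (c :: 'p mod_ring))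
      = (\<Sum>c\<in>UNIV - {0}. of_nat (tr_count D b 1) * zeta_pow (c :: 'p mod_ring))"
  proof (intro sum.cong refl)
    fix c :: "'p mod_ring"
    assume "c \<in> UNIV - {0}"
    then show "of_nat (tr_count D b c) * zeta_pow c = of_nat (tr_count D b 1) * zeta_pow c"
      using const[of c] by simp
  qed
  also have "\<dots> = - of_nat (tr_count D b (1 :: 'p mod_ring))"
    by (simp add: sum_distrib_left[symmetric] sum_zeta_pow_nonzero)
  finally show ?thesis
    by simp
qed

lemma chi_in_Ints_iff_tr_count_const:
  "chi TYPE('p) (b :: 'q) D \<in> \<int> \<longleftrightarrow> (\<forall>c \<noteq> 0. tr_count D b c = tr_count D b (1 :: 'p mod_ring))"
proof
  assume "chi TYPE('p) b D \<in> \<int>"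
  then obtain n where n: "chi TYPE('p) b D = of_int n"
    by (rule Ints_cases)
  show "\<forall>c \<noteq> 0. tr_count D b c = tr_count D b (1 :: 'p mod_ring)"
  proof (intro allI impI)
    fix c :: "'p mod_ring"
    assume "c \<noteq> 0"
    with n show "tr_count D b c = tr_count D b 1"
      by (rule chi_in_Ints_imp_tr_count_const)
  qed
next
  assume const: "\<forall>c \<noteq> 0. tr_count D b c = tr_count D b (1 :: 'p mod_ring)"
  have "chi TYPE('p) b D = of_nat (tr_count D b 0) - of_nat (tr_count D b (1 :: 'p mod_ring))"
    by (rule chi_eq_if_tr_count_const) (use const in blast)
  then show "chi TYPE('p) b D \<in> \<int>"
    by (simp add: Ints_diff)
qed

lemma tr_count_emb_mult:
  assumes a: "(a :: 'p mod_ring) \<noteq> 0"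
  shows "tr_count D (emb a * b :: 'q) c = tr_count D b (c / a)"
proof -
  have "Tr (emb a * b * x) = a * Tr (b * x)" for x
    by (simp only: mult.assoc Tr_emb_mult)
  moreover have "a * t = c \<longleftrightarrow> t = c / a" for t
    using a by (auto simp: field_simps)
  ultimately have "{x \<in> D. Tr (emb a * b * x) = c} = {x \<in> D. Tr (b * x) = c / a}"
    by simp
  then show ?thesis
    unfolding tr_count_def by simp
qed

lemma tr_count_scale_set:
  assumes a: "(a :: 'p mod_ring) \<noteq> 0"
  shows "tr_count (scale_set a D) b c = tr_count D (emb a * b :: 'q) c"
proof -
  have "tr_count (scale_set a D) b c = card ((\<lambda>x. emb a * x) ` {x \<in> D. Tr (b * (emb a * x)) = c})"
    unfolding tr_count_def scale_set_def by (simp only: Compr_image_eq)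
  also have "\<dots> = card {x \<in> D. Tr (b * (emb a * x)) = c}"
    using a by (intro card_image inj_onI) simp
  also have "\<dots> = tr_count D (emb a * b) c"
    unfolding tr_count_def by (simp only: mult.left_commute mult.assoc)
  finally show ?thesis .
qed

lemma chi_in_Ints_iff_scale_invariant:
  "(\<forall>b. chi TYPE('p) b D \<in> \<int>) \<longleftrightarrow> (\<forall>a :: 'p mod_ring. a \<noteq> 0 \<longrightarrow> scale_set a (D :: 'q set) = D)"
proof
  assume invariant: "\<forall>a :: 'p mod_ring. a \<noteq> 0 \<longrightarrow> scale_set a D = D"
  have const: "tr_count D b c = tr_count D b 1" if "c \<noteq> 0" for b and c :: "'p mod_ring"
  proof -
    have "tr_count D b 1 = tr_count (scale_set (inverse c) D) b 1"
      using invariant that by simp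
    also have "\<dots> = tr_count D b c"
      using that by (simp add: tr_count_scale_set tr_count_emb_mult divide_inverse)
    finally show ?thesis ..
  qed
  then show "\<forall>b. chi TYPE('p) b D \<in> \<int>"
    unfolding chi_in_Ints_iff_tr_count_const by blast
next
  assume "\<forall>b. chi TYPE('p) b D \<in> \<int>"
  then have const: "tr_count D b c = tr_count D b 1" if "c \<noteq> 0" for b and c :: "'p mod_ring"
    using that chi_in_Ints_iff_tr_count_const by blast
  show "\<forall>a :: 'p mod_ring. a \<noteq> 0 \<longrightarrow> scale_set a D = D"
  proof (intro allI impI)
    fix a :: "'p mod_ring"
    assume a: "a \<noteq> 0"
    have "tr_count D b (c / a) = tr_count D b c" for b c
      using const[of "c / a" b] const[of c b] a by (cases "c = 0") auto
    then have "chi TYPE('p) (emb a * b) D = chi TYPE('p) b D" for b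
      using a by (simp add: chi_eq_sum_tr_count tr_count_emb_mult)
    then have "\<forall>x. of_bool (emb a * x \<in> D) = (of_bool (x \<in> D) :: complex)"
      using fourier_scale_invariant_iff[of "emb a" "\<lambda>x. of_bool (x \<in> D)"] a
      by (simp add: chi_eq_fourier)
    then show "scale_set a D = D"
      using a by (simp add: scale_set_eq_iff of_bool_eq_iff)
  qed
qed

end

theorem lemma4p4:
  fixes f :: "'q::{finite,field} \<Rightarrow> 'p::prime_card mod_ring"
  assumes char: "CHAR('q) = CARD('p)"
  defines "C1 \<equiv> (\<forall>(a::'p mod_ring) x. a \<noteq> 0 \<longrightarrow> f (emb a * x) = f x)"
      and "C2 \<equiv> (\<forall>(a::'p mod_ring) \<beta>. a \<noteq> 0 \<longrightarrow> walsh f (emb a * \<beta>) = walsh f \<beta>)"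
      and "C3 \<equiv> (\<forall>(a::'p mod_ring) i. a \<noteq> 0 \<longrightarrow> scale_set a (Dset f i) = Dset f i)"
      and "C4 \<equiv> (\<forall>i \<beta>. chi TYPE('p) \<beta> (Dset f i) \<in> \<int>)"
  shows "(C1 \<longleftrightarrow> C2) \<and> (C1 \<longleftrightarrow> C3) \<and> (C1 \<longleftrightarrow> C4)"
proof -
  have walsh: "(\<forall>\<beta>. walsh f (emb a * \<beta>) = walsh f \<beta>) \<longleftrightarrow> (\<forall>x. f (emb a * x) = f x)"
    if "a \<noteq> 0" for a :: "'p mod_ring"
    using that by (simp add: walsh_scale_invariant_iff[OF char] emb_eq_0_iff[OF char])
  have level_sets: "scale_set a (Dset f i) = Dset f i \<longleftrightarrow> (\<forall>x. f (emb a * x) = i \<longleftrightarrow> f x = i)"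
    if "a \<noteq> 0" for a :: "'p mod_ring" and i
    using that by (simp add: scale_set_eq_iff[OF char] Dset_def)
  have C1_iff: "C1 \<longleftrightarrow> (\<forall>a :: 'p mod_ring. a \<noteq> 0 \<longrightarrow> (\<forall>x. f (emb a * x) = f x))"
    unfolding C1_def by blast
  have "C1 \<longleftrightarrow> C2"
    unfolding C1_iff C2_def by (simp add: walsh)
  moreover have "C1 \<longleftrightarrow> C3"
    unfolding C1_iff C3_def by (auto simp: level_sets)
  moreover have "C3 \<longleftrightarrow> C4"
    unfolding C3_def C4_def by (auto simp: chi_in_Ints_iff_scale_invariant[OF char])
  ultimately show ?thesis
    by blast
qed

end
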